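(* Let $U$ be a finite nonempty set, $R$ an equivalence relation on $U$, and $M(R)$ the support matroid induced by $R$. For every $X\subseteq U$, $X$ is a closed set of $M(R)$ if and only if $X$ is an $R$-precise set.
   Context: For $x\in U$, $RN(x)=\{y\in U\mid xRy\}$; $R_{*}(X)=\{x\in U\mid RN(x)\subseteq X\}$ and $R^{*}(X)=\{x\in U\mid RN(x)\cap X\neq\emptyset\}$. A set $X\subseteq U$ is $R$-precise if $R^{*}(X)=R_{*}(X)$, and $R$-rough otherwise. Let $\mathbf{S}(R)=\{X\subseteq U\mid R^{*}(X)=U\}$. The support matroid $M(R)=(U,\mathbf{I}(R))$ is the matroid on $U$ whose independent sets $\mathbf{I}(R)$ are the subsets of inclusion-minimal members of $\mathbf{S}(R)$. For a matroid $(U,\mathbf{I})$, the rank is $r(X)=\max\{|I|\mid I\subseteq X, I\in\mathbf{I}\}$, the closure is $cl(X)=\{e\in U\mid r(X)=r(X\cup\{e\})\}$, and $X$ is closed if $cl(X)=X$. *)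

theory Defs
  imports Main
begin

definition RN :: "'a set \<Rightarrow> 'a rel \<Rightarrow> 'a \<Rightarrow> 'a set" where
  "RN U R x = {y \<in> U. (x, y) \<in> R}"

definition lower_approx :: "'a set \<Rightarrow> 'a rel \<Rightarrow> 'a set \<Rightarrow> 'a set" where
  "lower_approx U R X = {x \<in> U. RN U R x \<subseteq> X}"

definition upper_approx :: "'a set \<Rightarrow> 'a rel \<Rightarrow> 'a set \<Rightarrow> 'a set" where
  "upper_approx U R X = {x \<in> U. RN U R x \<inter> X \<noteq> {}}"

definition R_precise :: "'a set \<Rightarrow> 'a rel \<Rightarrow> 'a set \<Rightarrow> bool" where
  "R_precise U R X \<longleftrightarrow> upper_approx U R X = lower_approx U R X"

definition support_sets :: "'a set \<Rightarrow> 'a rel \<Rightarrow> 'a set set" where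
  "support_sets U R = {X. X \<subseteq> U \<and> upper_approx U R X = U}"

definition minimal_support_sets :: "'a set \<Rightarrow> 'a rel \<Rightarrow> 'a set set" where
  "minimal_support_sets U R =
     {X \<in> support_sets U R. \<forall>Y \<in> support_sets U R. Y \<subseteq> X \<longrightarrow> Y = X}"

definition support_indep :: "'a set \<Rightarrow> 'a rel \<Rightarrow> 'a set set" where
  "support_indep U R = {I. \<exists>B \<in> minimal_support_sets U R. I \<subseteq> B}"

definition mat_rank :: "'a set set \<Rightarrow> 'a set \<Rightarrow> nat" where
  "mat_rank Ind X = Max {card I | I. I \<subseteq> X \<and> I \<in> Ind}"

definition mat_closure :: "'a set \<Rightarrow> 'a set set \<Rightarrow> 'a set \<Rightarrow> 'a set" where
  "mat_closure U Ind X = {e \<in> U. mat_rank Ind X = mat_rank Ind (X \<union> {e})}"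

definition mat_closed :: "'a set \<Rightarrow> 'a set set \<Rightarrow> 'a set \<Rightarrow> bool" where
  "mat_closed U Ind X \<longleftrightarrow> mat_closure U Ind X = X"

end

theory Submission
  imports Defs
begin

text \<open>Read every set through the class map x \<mapsto> R``{x}. A support set is one meeting every
  class, so the minimal support sets are the transversals and the independent sets of M(R) are the
  partial transversals, the sets on which the class map is injective. Hence the rank of X is the
  number of classes meeting X, and e lies in the closure of X iff its class already meets X: the
  closure is the upper approximation. For an equivalence, X is precise iff it is a union of
  classes, i.e. iff it equals its upper approximation.\<close>

definition partial_transversal :: "'a set \<Rightarrow> 'a rel \<Rightarrow> 'a set \<Rightarrow> bool" where
  "partial_transversal U R I \<longleftrightarrow> I \<subseteq> U \<and> inj_on (\<lambda>x. R``{x}) I"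

lemma obtain_inj_on_subset_same_image:
  obtains B where "B \<subseteq> A" "inj_on f B" "f ` B = f ` A"
proof
  let ?B = "inv_into A f ` f ` A"
  show "?B \<subseteq> A" by (auto intro: inv_into_into)
  show "inj_on f ?B" by (rule inj_onI) (auto simp: f_inv_into_f)
  show "f ` ?B = f ` A" by (simp add: image_image f_inv_into_f cong: image_cong)
qed

lemma RN_equiv:
  assumes "equiv U R"
  shows "RN U R x = R``{x}"
  using equiv_type[OF assms] unfolding RN_def by blast

lemma mem_upper_approx_iff_class:
  assumes "equiv U R" "X \<subseteq> U"
  shows "x \<in> upper_approx U R X \<longleftrightarrow> x \<in> U \<and> R``{x} \<in> (\<lambda>y. R``{y}) ` X"
  using assms eq_equiv_class_iff[OF assms(1)]
  unfolding upper_approx_def RN_equiv[OF assms(1)] by blast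

lemma support_sets_iff_classes:
  assumes "equiv U R" "B \<subseteq> U"
  shows "B \<in> support_sets U R \<longleftrightarrow> (\<lambda>x. R``{x}) ` U \<subseteq> (\<lambda>x. R``{x}) ` B"
proof -
  have "B \<in> support_sets U R \<longleftrightarrow> U \<subseteq> upper_approx U R B"
    using assms(2) unfolding support_sets_def upper_approx_def by blast
  then show ?thesis using mem_upper_approx_iff_class[OF assms] by blast
qed

lemma minimal_support_set_partial_transversal:
  assumes eq: "equiv U R" and B: "B \<in> minimal_support_sets U R"
  shows "partial_transversal U R B"
proof -
  let ?cls = "\<lambda>x. R``{x}"
  have supp_B: "B \<in> support_sets U R"
    and minimal: "\<And>Y. Y \<in> support_sets U R \<Longrightarrow> Y \<subseteq> B \<Longrightarrow> Y = B"
    using B unfolding minimal_support_sets_def by auto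
  have BU: "B \<subseteq> U" using supp_B unfolding support_sets_def by blast
  have supp: "?cls ` U \<subseteq> ?cls ` B" using supp_B support_sets_iff_classes[OF eq BU] by blast
  have "inj_on ?cls B"
  proof (rule inj_onI, rule ccontr)
    fix a b assume ab: "a \<in> B" "b \<in> B" "?cls a = ?cls b" "a \<noteq> b"
    \<comment> \<open>b still represents the class of a, so dropping a keeps B a support set\<close>
    have cover: "?cls ` B \<subseteq> ?cls ` (B - {a})"
    proof
      fix c assume "c \<in> ?cls ` B"
      then obtain x where x: "x \<in> B" "c = ?cls x" by blast
      show "c \<in> ?cls ` (B - {a})"
      proof (cases "x = a")
        case True
        then show ?thesis using x ab by (intro image_eqI[of _ _ b]) auto
      next
        case False
        then show ?thesis using x by blast
      qed
    qed
    have sub: "B - {a} \<subseteq> U" using BU by blast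
    have "B - {a} \<in> support_sets U R"
      unfolding support_sets_iff_classes[OF eq sub] using supp cover by (rule subset_trans)
    then show False using minimal ab(1) by blast
  qed
  then show ?thesis using BU unfolding partial_transversal_def by blast
qed

lemma partial_transversal_extends_to_minimal_support_set:
  assumes eq: "equiv U R" and I: "partial_transversal U R I"
  obtains T where "T \<in> minimal_support_sets U R" "I \<subseteq> T"
proof -
  let ?cls = "\<lambda>x. R``{x}"
  have IU: "I \<subseteq> U" and injI: "inj_on ?cls I"
    using I unfolding partial_transversal_def by auto
  \<comment> \<open>one representative of each class that does not meet I\<close>
  obtain C where C: "C \<subseteq> U - R``I" "inj_on ?cls C" "?cls ` C = ?cls ` (U - R``I)"
    by (rule obtain_inj_on_subset_same_image)
  let ?T = "I \<union> C"
  have TU: "?T \<subseteq> U" using IU C(1) by blast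
  have disjoint: "?cls ` I \<inter> ?cls ` C = {}"
    using C(1) IU eq_equiv_class_iff[OF eq] equiv_type[OF eq] by blast
  have injT: "inj_on ?cls ?T"
    using injI C(2) disjoint by (auto simp: inj_on_Un)
  have "?cls ` U \<subseteq> ?cls ` ?T"
  proof
    fix c assume "c \<in> ?cls ` U"
    then obtain u where u: "u \<in> U" "c = ?cls u" by blast
    show "c \<in> ?cls ` ?T"
    proof (cases "u \<in> R``I")
      case True
      then obtain i where "i \<in> I" "(i, u) \<in> R" by blast
      then show ?thesis using u equiv_class_eq[OF eq] by blast
    next
      case False
      then show ?thesis using u C(3) by blast
    qed
  qed
  then have supp: "?T \<in> support_sets U R" using support_sets_iff_classes[OF eq TU] by blast
  have "?T \<in> minimal_support_sets U R"
    unfolding minimal_support_sets_def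
  proof (intro CollectI conjI ballI impI supp)
    fix Y assume Y: "Y \<in> support_sets U R" "Y \<subseteq> ?T"
    then have "?cls ` ?T \<subseteq> ?cls ` Y"
      using TU support_sets_iff_classes[OF eq, of Y] by blast
    have "?T \<subseteq> Y"
    proof
      fix t assume t: "t \<in> ?T"
      then obtain y where "y \<in> Y" "?cls t = ?cls y" using \<open>?cls ` ?T \<subseteq> ?cls ` Y\<close> by blast
      then show "t \<in> Y" using t Y(2) inj_onD[OF injT] by blast
    qed
    then show "Y = ?T" using Y(2) by blast
  qed
  then show thesis using that by blast
qed

lemma support_indep_eq_partial_transversals:
  assumes "equiv U R"
  shows "support_indep U R = {I. partial_transversal U R I}"
proof (intro equalityI subsetI CollectI)
  fix I assume "I \<in> support_indep U R"
  then obtain B where B: "B \<in> minimal_support_sets U R" "I \<subseteq> B"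
    unfolding support_indep_def by blast
  have "partial_transversal U R B" using B(1) by (rule minimal_support_set_partial_transversal[OF assms])
  then show "partial_transversal U R I"
    using B(2) unfolding partial_transversal_def by (auto intro: inj_on_subset)
next
  fix I assume "I \<in> {I. partial_transversal U R I}"
  then have "partial_transversal U R I" by simp
  then obtain T where "T \<in> minimal_support_sets U R" "I \<subseteq> T"
    by (rule partial_transversal_extends_to_minimal_support_set[OF assms])
  then show "I \<in> support_indep U R" unfolding support_indep_def by blast
qed

lemma mat_rank_support_indep:
  assumes eq: "equiv U R" and "finite X" "X \<subseteq> U"
  shows "mat_rank (support_indep U R) X = card ((\<lambda>x. R``{x}) ` X)"
proof -
  let ?cls = "\<lambda>x. R``{x}"
  let ?cards = "{card I | I. I \<subseteq> X \<and> I \<in> support_indep U R}"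
  have bounded: "n \<le> card (?cls ` X)" if "n \<in> ?cards" for n
  proof -
    from that obtain I where I: "I \<subseteq> X" "partial_transversal U R I" "n = card I"
      using support_indep_eq_partial_transversals[OF eq] by auto
    then have "card I = card (?cls ` I)"
      by (simp add: card_image partial_transversal_def)
    also have "\<dots> \<le> card (?cls ` X)"
      using I(1) \<open>finite X\<close> by (intro card_mono) auto
    finally show ?thesis using I(3) by simp
  qed
  obtain I where I: "I \<subseteq> X" "inj_on ?cls I" "?cls ` I = ?cls ` X"
    by (rule obtain_inj_on_subset_same_image)
  have "partial_transversal U R I"
    using I assms(3) unfolding partial_transversal_def by blast
  then have attained: "card (?cls ` X) \<in> ?cards"
    using I support_indep_eq_partial_transversals[OF eq] card_image[OF I(2)] by auto
  have "?cards \<subseteq> {..card (?cls ` X)}" using bounded by blast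
  then have "finite ?cards" by (rule finite_subset) simp
  then show ?thesis unfolding mat_rank_def using bounded attained by (rule Max_eqI)
qed

lemma mat_closure_support_indep:
  assumes eq: "equiv U R" and "finite U" "X \<subseteq> U"
  shows "mat_closure U (support_indep U R) X = upper_approx U R X"
proof (intro set_eqI)
  fix e
  let ?cls = "\<lambda>x. R``{x}"
  have fin: "finite X" using assms(2,3) by (rule finite_subset[rotated])
  have rank_X: "mat_rank (support_indep U R) X = card (?cls ` X)"
    using eq fin assms(3) by (rule mat_rank_support_indep)
  have rank_Xe: "mat_rank (support_indep U R) (X \<union> {e}) = card (insert (?cls e) (?cls ` X))"
    if "e \<in> U"
    using mat_rank_support_indep[OF eq, of "X \<union> {e}"] fin assms(3) that by simp
  have "e \<in> mat_closure U (support_indep U R) X \<longleftrightarrow>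
        e \<in> U \<and> card (?cls ` X) = card (insert (?cls e) (?cls ` X))"
    unfolding mat_closure_def using rank_X rank_Xe by auto
  also have "\<dots> \<longleftrightarrow> e \<in> U \<and> ?cls e \<in> ?cls ` X"
    using fin by (simp add: card_insert_if)
  also have "\<dots> \<longleftrightarrow> e \<in> upper_approx U R X"
    using mem_upper_approx_iff_class[OF eq assms(3)] by blast
  finally show "e \<in> mat_closure U (support_indep U R) X \<longleftrightarrow> e \<in> upper_approx U R X" .
qed

lemma R_precise_iff_upper_approx_eq:
  assumes eq: "equiv U R" and "X \<subseteq> U"
  shows "R_precise U R X \<longleftrightarrow> upper_approx U R X = X"
proof -
  have "lower_approx U R X \<subseteq> X" "X \<subseteq> upper_approx U R X"
    using assms equiv_class_self[OF eq]
    unfolding lower_approx_def upper_approx_def RN_equiv[OF eq] by blast+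
  moreover have "upper_approx U R X \<subseteq> lower_approx U R X" if "upper_approx U R X = X"
    using that equiv_class_eq[OF eq] equiv_type[OF eq]
    unfolding lower_approx_def upper_approx_def RN_equiv[OF eq] by blast
  ultimately show ?thesis unfolding R_precise_def by blast
qed

theorem corollary4:
  fixes U :: "'a set" and R :: "'a rel" and X :: "'a set"
  assumes "finite U" and "U \<noteq> {}" and "equiv U R" and "X \<subseteq> U"
  shows "mat_closed U (support_indep U R) X \<longleftrightarrow> R_precise U R X"
proof -
  have "mat_closure U (support_indep U R) X = upper_approx U R X"
    using assms(3,1,4) by (rule mat_closure_support_indep)
  then show ?thesis
    unfolding mat_closed_def R_precise_iff_upper_approx_eq[OF assms(3,4)] by simp
qed

end
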